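(* Consider the compound decision framework described in the context, with first selection rule $\mathbf s^1:\mathcal X\to\{0,1\}^m$, decision strategy $\tilde{\mathbf d}:\{0,1\}^m\times\mathcal X\to\mathcal D$ and selection strategy $\tilde{\mathbf s}:\mathcal D\times\mathcal X\to\{0,1\}^m$. Suppose (i) the composite selection is contracting: for every $\mathbf S\in\{0,1\}^m$, $\tilde{\mathbf s}(\tilde{\mathbf d}(\mathbf S,\mathbf X),\mathbf X)\preceq\mathbf S$ with probability 1; (ii) for all $t\ge1$ and all $\theta\in\Theta$, $r(\mathbf d^t,\mathbf s^t,\theta)\le q$. Then the decision rule $\mathbf d^T$ produced by the iteration controls the extra-selection risk at level $q$: for all $\theta\in\Theta$, $$r(\mathbf d^T,\mathbf s^{T+1},\theta)=\mathbb E_\theta\left[\frac{\sum_{i\in\mathcal S^{T+1}}\ell_i(D_i^T,\theta)}{1\vee|\mathcal S^{T+1}|}\right]\le q.$$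
   Context: Data $\mathbf X$ takes values in a space $\mathcal X$ with distribution $P_\theta$, $\theta\in\Theta$; $\mathbb E_\theta$ is expectation under $P_\theta$. There are $m$ tasks; task $i$ has a decision space $\mathcal D_i$ and loss $\ell_i:\mathcal D_i\times\Theta\to[0,1]$; $\mathcal D=\mathcal D_1\times\dots\times\mathcal D_m$. For a decision rule $\mathbf d:\mathcal X\to\mathcal D$ and selection rule $\mathbf s:\mathcal X\to\{0,1\}^m$, the selective risk is $r(\mathbf d,\mathbf s,\theta)=\mathbb E_\theta\big[\sum_{i=1}^m s_i(\mathbf X)\ell_i(d_i(\mathbf X),\theta)/(1\vee\sum_{i=1}^m s_i(\mathbf X))\big]$. For $\mathbf S,\mathbf S'\in\{0,1\}^m$, $\mathbf S\preceq\mathbf S'$ means $S_i\le S_i'$ for all $i$; the selected set of $\mathbf S$ is $\mathcal S=\{i:S_i=1\}$ and $|\mathcal S|=\sum_iS_i$. The iteration (Algorithm 1): $\mathbf S^1=\mathbf s^1(\mathbf X)$; for $t\ge1$, $\mathbf D^t=\tilde{\mathbf d}(\mathbf S^t,\mathbf X)$ and $\mathbf S^{t+1}=\tilde{\mathbf s}(\mathbf D^t,\mathbf X)$; $T$ is the first $t$ with $\mathbf S^{t+1}=\mathbf S^t$ (a random index). Cumulative rules: $\mathbf s^t(\mathbf X)=\mathbf S^t$ i.e. $\mathbf s^t=(\tilde{\mathbf s}\circ\tilde{\mathbf d})^{t-1}\circ\mathbf s^1$ where $(\tilde{\mathbf s}\circ\tilde{\mathbf d})(\mathbf S,\mathbf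 X)=\tilde{\mathbf s}(\tilde{\mathbf d}(\mathbf S,\mathbf X),\mathbf X)$, and $\mathbf d^t(\mathbf X)=\tilde{\mathbf d}(\mathbf s^t(\mathbf X),\mathbf X)=\mathbf D^t$. The rules $\mathbf d^T$ and $\mathbf s^{T+1}$ map $\mathbf X$ to $\mathbf D^{T}$ and $\mathbf S^{T+1}$ respectively. *)

theory Defs
  imports "HOL-Probability.Probability"
begin

text \<open>Tasks are indexed by a finite type 'i (m = CARD('i)); a selection vector
S in {0,1}^m is represented by its selected set (an 'i set); decisions are
functions 'i => 'd, with decision spaces Dsp i.\<close>

definition sel_risk ::
  "'x measure \<Rightarrow> ('i::finite \<Rightarrow> 'd \<Rightarrow> 'th \<Rightarrow> real) \<Rightarrow> 'th
   \<Rightarrow> ('x \<Rightarrow> 'i \<Rightarrow> 'd) \<Rightarrow> ('x \<Rightarrow> 'i set) \<Rightarrow> real" where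
  "sel_risk P l \<theta> d s =
     (\<integral>x. (\<Sum>i\<in>s x. l i (d x i) \<theta>) / max 1 (real (card (s x))) \<partial>P)"

definition cum_sel ::
  "('x \<Rightarrow> 'i set) \<Rightarrow> ('i set \<Rightarrow> 'x \<Rightarrow> 'i \<Rightarrow> 'd) \<Rightarrow> (('i \<Rightarrow> 'd) \<Rightarrow> 'x \<Rightarrow> 'i set)
   \<Rightarrow> nat \<Rightarrow> 'x \<Rightarrow> 'i set" where
  "cum_sel s1 dt st t x = ((\<lambda>S. st (dt S x) x) ^^ (t - 1)) (s1 x)"

definition cum_dec ::
  "('x \<Rightarrow> 'i set) \<Rightarrow> ('i set \<Rightarrow> 'x \<Rightarrow> 'i \<Rightarrow> 'd) \<Rightarrow> (('i \<Rightarrow> 'd) \<Rightarrow> 'x \<Rightarrow> 'i set)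
   \<Rightarrow> nat \<Rightarrow> 'x \<Rightarrow> 'i \<Rightarrow> 'd" where
  "cum_dec s1 dt st t x = dt (cum_sel s1 dt st t x) x"

definition stop_time ::
  "('x \<Rightarrow> 'i set) \<Rightarrow> ('i set \<Rightarrow> 'x \<Rightarrow> 'i \<Rightarrow> 'd) \<Rightarrow> (('i \<Rightarrow> 'd) \<Rightarrow> 'x \<Rightarrow> 'i set)
   \<Rightarrow> 'x \<Rightarrow> nat" where
  "stop_time s1 dt st x =
     (LEAST t. 1 \<le> t \<and> cum_sel s1 dt st (Suc t) x = cum_sel s1 dt st t x)"

end

theory Submission
  imports Defs
begin

text \<open>If the composite map S \<mapsto> s~(d~(S, X), X) is deflationary, the selected sets S^t
decrease, so on a finite index set they become constant after at most m steps. From the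
stopping index T on, the iteration is at this fixed point, hence almost surely
(d^T, s^(T+1)) = (d^(m+1), s^(m+1)) and the stopped risk is just the risk of the fixed
round m + 1, which is at most q by hypothesis.\<close>

lemma deflationary_funpow_fixpoint:
  fixes F :: "'a set \<Rightarrow> 'a set"
  assumes deflationary: "\<And>S. F S \<subseteq> S" and "finite S0"
  shows "\<exists>k \<le> card S0. F ((F ^^ k) S0) = (F ^^ k) S0"
  using \<open>finite S0\<close>
proof (induction S0 rule: finite_psubset_induct)
  case (psubset S)
  show ?case
  proof (cases "F S = S")
    case True
    then show ?thesis by (intro exI[of _ 0]) simp
  next
    case False
    with deflationary have "F S \<subset> S" by blast
    with psubset.hyps have card_less: "card (F S) < card S"
      by (simp add: psubset_card_mono)
    from \<open>F S \<subset> S\<close> obtain k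
      where "k \<le> card (F S)" "F ((F ^^ k) (F S)) = (F ^^ k) (F S)"
      using psubset.IH by blast
    moreover have "(F ^^ Suc k) S = (F ^^ k) (F S)"
      by (simp only: funpow_Suc_right o_apply)
    ultimately show ?thesis
      using card_less by (intro exI[of _ "Suc k"]) simp
  qed
qed

lemma funpow_eq_after_fixpoint:
  assumes fixed: "f ((f ^^ k) x) = (f ^^ k) x" and "k \<le> n"
  shows "(f ^^ n) x = (f ^^ k) x"
  using \<open>k \<le> n\<close>
proof (induction n rule: dec_induct)
  case (step n)
  then show ?case using fixed by simp
qed simp

lemma cum_sel_stop_time:
  fixes s1 :: "'x \<Rightarrow> 'i::finite set"
  assumes contracting: "\<And>S. st (dt S x) x \<subseteq> S"
  shows "cum_sel s1 dt st (stop_time s1 dt st x) x = cum_sel s1 dt st (Suc CARD('i)) x"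
    and "cum_sel s1 dt st (Suc (stop_time s1 dt st x)) x = cum_sel s1 dt st (Suc CARD('i)) x"
proof -
  define F where "F = (\<lambda>S. st (dt S x) x)"
  define T where "T = stop_time s1 dt st x"
  define stops where "stops t \<longleftrightarrow> (\<exists>j. t = Suc j \<and> F ((F ^^ j) (s1 x)) = (F ^^ j) (s1 x))"
    for t
  have cum_sel_F: "cum_sel s1 dt st t x = (F ^^ (t - 1)) (s1 x)" for t
    by (simp add: cum_sel_def F_def)
  have "1 \<le> t \<and> cum_sel s1 dt st (Suc t) x = cum_sel s1 dt st t x \<longleftrightarrow> stops t" for t
    by (cases t) (simp_all add: cum_sel_F stops_def)
  then have T_least: "T = Least stops"
    by (simp add: T_def stop_time_def)
  obtain k where "k \<le> card (s1 x)" and fix_k: "F ((F ^^ k) (s1 x)) = (F ^^ k) (s1 x)"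
    using deflationary_funpow_fixpoint[of F "s1 x"] contracting by (auto simp: F_def)
  then have k: "k \<le> CARD('i)" and stops_Suc_k: "stops (Suc k)"
    using card_mono[of UNIV "s1 x"] by (simp_all add: stops_def)
  have "stops T"
    unfolding T_least by (rule LeastI[of stops, OF stops_Suc_k])
  then obtain j where T: "T = Suc j" and fix_j: "F ((F ^^ j) (s1 x)) = (F ^^ j) (s1 x)"
    unfolding stops_def by blast
  have "T \<le> Suc k"
    unfolding T_least by (rule Least_le[of stops, OF stops_Suc_k])
  with T k have "(F ^^ CARD('i)) (s1 x) = (F ^^ j) (s1 x)"
    by (intro funpow_eq_after_fixpoint[OF fix_j]) simp
  then show "cum_sel s1 dt st T x = cum_sel s1 dt st (Suc CARD('i)) x"
    and "cum_sel s1 dt st (Suc T) x = cum_sel s1 dt st (Suc CARD('i)) x"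
    using fix_j by (simp_all add: cum_sel_F T)
qed

lemma measurable_funpow_count_space:
  fixes F :: "'a::countable \<Rightarrow> 'x \<Rightarrow> 'a"
  assumes F: "\<And>a. F a \<in> measurable M (count_space UNIV)"
    and s: "s \<in> measurable M (count_space UNIV)"
  shows "(\<lambda>x. ((\<lambda>a. F a x) ^^ n) (s x)) \<in> measurable M (count_space UNIV)"
proof (induction n)
  case (Suc n)
  have "(\<lambda>x. F (((\<lambda>a. F a x) ^^ n) (s x)) x) \<in> measurable M (count_space UNIV)"
    by (rule measurable_compose_countable[where f = F, OF F Suc])
  then show ?case by simp
qed (simp add: s)

context
  fixes M :: "'x measure"
    and s1 :: "'x \<Rightarrow> 'i::finite set"
    and dt :: "'i set \<Rightarrow> 'x \<Rightarrow> 'i \<Rightarrow> 'd"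
    and st :: "('i \<Rightarrow> 'd) \<Rightarrow> 'x \<Rightarrow> 'i set"
  assumes meas_s1: "s1 \<in> measurable M (count_space UNIV)"
    and meas_comp: "\<And>S. (\<lambda>x. st (dt S x) x) \<in> measurable M (count_space UNIV)"
begin

lemma measurable_cum_sel: "cum_sel s1 dt st t \<in> measurable M (count_space UNIV)"
  unfolding cum_sel_def
  by (rule measurable_funpow_count_space[OF meas_comp meas_s1])

lemma measurable_stop_time: "stop_time s1 dt st \<in> measurable M (count_space UNIV)"
proof -
  have [measurable]: "Measurable.pred M (\<lambda>x. cum_sel s1 dt st (Suc t) x = cum_sel s1 dt st t x)"
    for t
    by (rule measurable_compose_countable[where f = "\<lambda>S x. S = cum_sel s1 dt st t x",
          OF pred_count_space_const2[OF measurable_cum_sel] measurable_cum_sel])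
  show ?thesis
    unfolding stop_time_def by measurable
qed

lemma measurable_cum_sel_at:
  assumes "\<tau> \<in> measurable M (count_space UNIV)"
  shows "(\<lambda>x. cum_sel s1 dt st (\<tau> x) x) \<in> measurable M (count_space UNIV)"
  by (rule measurable_compose_countable[where f = "cum_sel s1 dt st", OF measurable_cum_sel assms])

end

lemma measurable_sel_risk_integrand:
  fixes A B :: "'x \<Rightarrow> 'i::finite set"
  assumes A: "A \<in> measurable M (count_space UNIV)" and B: "B \<in> measurable M (count_space UNIV)"
    and meas_loss: "\<And>S i. (\<lambda>x. l i (dt S x i) \<theta>) \<in> borel_measurable M"
  shows "(\<lambda>x. (\<Sum>i\<in>B x. l i (dt (A x) x i) \<theta>) / max 1 (real (card (B x))))
           \<in> borel_measurable M"
proof -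
  have "(\<lambda>x. (\<Sum>i\<in>S'. l i (dt S x i) \<theta>) / max 1 (real (card S'))) \<in> borel_measurable M"
    for S S'
    using meas_loss by measurable
  then have "(\<lambda>x. (\<Sum>i\<in>B x. l i (dt S x i) \<theta>) / max 1 (real (card (B x))))
      \<in> borel_measurable M" for S
    by (rule measurable_compose_countable[OF _ B,
          where f = "\<lambda>S' x. (\<Sum>i\<in>S'. l i (dt S x i) \<theta>) / max 1 (real (card S'))"])
  then show ?thesis
    by (rule measurable_compose_countable[OF _ A,
          where f = "\<lambda>S x. (\<Sum>i\<in>B x. l i (dt S x i) \<theta>) / max 1 (real (card (B x)))"])
qed

lemma sel_risk_cong_AE:
  fixes A B A' B' :: "'x \<Rightarrow> 'i::finite set"
  assumes "A \<in> measurable M (count_space UNIV)" and "B \<in> measurable M (count_space UNIV)"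
    and "A' \<in> measurable M (count_space UNIV)" and "B' \<in> measurable M (count_space UNIV)"
    and meas_loss: "\<And>S i. (\<lambda>x. l i (dt S x i) \<theta>) \<in> borel_measurable M"
    and AE_eq: "AE x in M. A x = A' x \<and> B x = B' x"
  shows "sel_risk M l \<theta> (\<lambda>x. dt (A x) x) B = sel_risk M l \<theta> (\<lambda>x. dt (A' x) x) B'"
  unfolding sel_risk_def
proof (rule integral_cong_AE)
  show "(\<lambda>x. (\<Sum>i\<in>B x. l i (dt (A x) x i) \<theta>) / max 1 (real (card (B x))))
      \<in> borel_measurable M"
    by (rule measurable_sel_risk_integrand[where l = l and dt = dt, OF assms(1,2) meas_loss])
  show "(\<lambda>x. (\<Sum>i\<in>B' x. l i (dt (A' x) x i) \<theta>) / max 1 (real (card (B' x))))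
      \<in> borel_measurable M"
    by (rule measurable_sel_risk_integrand[where l = l and dt = dt, OF assms(3,4) meas_loss])
  show "AE x in M. (\<Sum>i\<in>B x. l i (dt (A x) x i) \<theta>) / max 1 (real (card (B x)))
      = (\<Sum>i\<in>B' x. l i (dt (A' x) x i) \<theta>) / max 1 (real (card (B' x)))"
    using AE_eq by eventually_elim simp
qed

theorem theorem1:
  fixes P :: "'th \<Rightarrow> 'x measure"
    and \<Theta> :: "'th set"
    and Dsp :: "'i::finite \<Rightarrow> 'd set"
    and l :: "'i \<Rightarrow> 'd \<Rightarrow> 'th \<Rightarrow> real"
    and s1 :: "'x \<Rightarrow> 'i set"
    and dt :: "'i set \<Rightarrow> 'x \<Rightarrow> 'i \<Rightarrow> 'd"
    and st :: "('i \<Rightarrow> 'd) \<Rightarrow> 'x \<Rightarrow> 'i set"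
    and q :: real
  assumes prob: "\<And>\<theta>. \<theta> \<in> \<Theta> \<Longrightarrow> prob_space (P \<theta>)"
    and loss_range: "\<And>i d \<theta>. d \<in> Dsp i \<Longrightarrow> \<theta> \<in> \<Theta> \<Longrightarrow> 0 \<le> l i d \<theta> \<and> l i d \<theta> \<le> 1"
    and dt_range: "\<And>S x i. dt S x i \<in> Dsp i"
    and meas_s1: "\<And>\<theta>. \<theta> \<in> \<Theta> \<Longrightarrow> s1 \<in> measurable (P \<theta>) (count_space UNIV)"
    and meas_comp: "\<And>\<theta> S. \<theta> \<in> \<Theta> \<Longrightarrow>
                      (\<lambda>x. st (dt S x) x) \<in> measurable (P \<theta>) (count_space UNIV)"
    and meas_loss: "\<And>\<theta> S i. \<theta> \<in> \<Theta> \<Longrightarrow> (\<lambda>x. l i (dt S x i) \<theta>) \<in> borel_measurable (P \<theta>)"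
    and contracting: "\<And>\<theta> S. \<theta> \<in> \<Theta> \<Longrightarrow> AE x in P \<theta>. st (dt S x) x \<subseteq> S"
    and risk_t: "\<And>t \<theta>. 1 \<le> t \<Longrightarrow> \<theta> \<in> \<Theta> \<Longrightarrow>
                   sel_risk (P \<theta>) l \<theta> (cum_dec s1 dt st t) (cum_sel s1 dt st t) \<le> q"
  shows "\<forall>\<theta>\<in>\<Theta>. sel_risk (P \<theta>) l \<theta>
            (\<lambda>x. cum_dec s1 dt st (stop_time s1 dt st x) x)
            (\<lambda>x. cum_sel s1 dt st (Suc (stop_time s1 dt st x)) x) \<le> q"
proof
  fix \<theta> assume \<theta>: "\<theta> \<in> \<Theta>"
  let ?T = "stop_time s1 dt st" and ?N = "Suc CARD('i)"
  note meas_s1 = meas_s1[OF \<theta>] and meas_comp = meas_comp[OF \<theta>]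
  note meas_cum_sel = measurable_cum_sel[where dt = dt and st = st, OF meas_s1 meas_comp]
    and meas_cum_sel_at = measurable_cum_sel_at[where dt = dt and st = st, OF meas_s1 meas_comp]
  have meas_T: "?T \<in> measurable (P \<theta>) (count_space UNIV)"
    by (rule measurable_stop_time[where dt = dt and st = st, OF meas_s1 meas_comp])
  then have meas_Suc_T: "(\<lambda>x. Suc (?T x)) \<in> measurable (P \<theta>) (count_space UNIV)"
    by measurable
  have "AE x in P \<theta>. \<forall>S. st (dt S x) x \<subseteq> S"
    using contracting[OF \<theta>] by (simp add: AE_all_countable)
  then have "AE x in P \<theta>. cum_sel s1 dt st (?T x) x = cum_sel s1 dt st ?N x
      \<and> cum_sel s1 dt st (Suc (?T x)) x = cum_sel s1 dt st ?N x"
    by eventually_elim (simp add: cum_sel_stop_time)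
  \<comment> \<open>No integrability is needed, hence neither the loss bounds nor prob_space.\<close>
  then have "sel_risk (P \<theta>) l \<theta> (\<lambda>x. cum_dec s1 dt st (?T x) x)
      (\<lambda>x. cum_sel s1 dt st (Suc (?T x)) x)
      = sel_risk (P \<theta>) l \<theta> (cum_dec s1 dt st ?N) (cum_sel s1 dt st ?N)"
    unfolding cum_dec_def[abs_def]
    by (rule sel_risk_cong_AE[where l = l and dt = dt, OF meas_cum_sel_at[OF meas_T] meas_cum_sel_at[OF meas_Suc_T]
          meas_cum_sel meas_cum_sel meas_loss[OF \<theta>]])
  also have "\<dots> \<le> q"
    using risk_t[OF _ \<theta>] by simp
  finally show "sel_risk (P \<theta>) l \<theta> (\<lambda>x. cum_dec s1 dt st (?T x) x)
      (\<lambda>x. cum_sel s1 dt st (Suc (?T x)) x) \<le> q" .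
qed

end
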